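(* In the setting of the context, for $\delta\in(0,1)$, with probability at least $1-\delta$, for all $t\in[H]$ and all $(s,a)$ with $d^\mu_t(s,a)>0$, \[ \big|\tilde\sigma_{V^{\rm in}_{t+1}}(s,a)-\sigma_{V^{\rm in}_{t+1}}(s,a)\big|\le6H^2\sqrt{\frac{\log(4HSA/\delta)}{m\,d^\mu_t(s,a)}}+\frac{4H^2\log(4HSA/\delta)}{m\,d^\mu_t(s,a)}. \]
   Context: $\mathcal D$ consists of $m$ i.i.d. episodes from behavior policy $\mu$ in a finite-horizon tabular MDP with $S$ states, $A$ actions, horizon $H$, transitions $P_t$. For each $t\in[H]$, $V^{\rm in}_{t+1}:\mathcal S\to[0,H]$ is fixed (not depending on $\mathcal D$). $d^\mu_t(s,a)=\mathbb P^\mu(s_t=s,a_t=a)$; $\sigma_V(s,a)=\mathrm{Var}_{s'\sim P_t(\cdot|s,a)}[V(s')]$. $n_{t,s,a}$ is the number of episodes in $\mathcal D$ with $(s_t,a_t)=(s,a)$. If $n_{t,s,a}\ge\frac12md^\mu_t(s,a)$ and $n_{t,s,a}>0$, set $\tilde z_t(s,a)=\frac1{n_{t,s,a}}\sum_iV^{\rm in}_{t+1}(s^{(i)}_{t+1})\mathbf 1[s^{(i)}_t=s,a^{(i)}_t=a]$ and $\tilde\sigma_{V^{\rm in}_{t+1}}(s,a)=\frac1{n_{t,s,a}}\sum_i[V^{\rm in}_{t+1}(s^{(i)}_{t+1})]^2\mathbf 1[s^{(i)}_t=s,a^{(i)}_t=a]-\tilde z_t(s,a)^2$; otherwise $\tilde\sigma_{V^{\rm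 in}_{t+1}}(s,a)=\sigma_{V^{\rm in}_{t+1}}(s,a)$. *)

theory Defs
  imports "HOL-Probability.Probability"
begin

text \<open>Finite-horizon tabular MDP with finite state type 's and action type 'a.
  init: initial state distribution; mu t s: behaviour policy at time t;
  P t s a: transition kernel P_t(. | s, a).  An episode is the list of
  transitions (s_t, a_t, s_(t+1)) for t = 1..H (list index t-1).\<close>

type_synonym ('s,'a) episode = "('s \<times> 'a \<times> 's) list"

fun traj_from :: "(nat \<Rightarrow> 's \<Rightarrow> 'a pmf) \<Rightarrow> (nat \<Rightarrow> 's \<Rightarrow> 'a \<Rightarrow> 's pmf)
    \<Rightarrow> nat \<Rightarrow> nat \<Rightarrow> 's \<Rightarrow> ('s,'a) episode pmf" where
  "traj_from mu P t 0 s = return_pmf []"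
| "traj_from mu P t (Suc k) s =
     bind_pmf (mu t s) (\<lambda>a. bind_pmf (P t s a) (\<lambda>s'.
       map_pmf (\<lambda>rest. (s, a, s') # rest) (traj_from mu P (Suc t) k s')))"

definition episode_pmf :: "'s pmf \<Rightarrow> (nat \<Rightarrow> 's \<Rightarrow> 'a pmf) \<Rightarrow> (nat \<Rightarrow> 's \<Rightarrow> 'a \<Rightarrow> 's pmf)
    \<Rightarrow> nat \<Rightarrow> ('s,'a) episode pmf" where
  "episode_pmf init mu P H = bind_pmf init (traj_from mu P 1 H)"

definition dataset_pmf :: "'s pmf \<Rightarrow> (nat \<Rightarrow> 's \<Rightarrow> 'a pmf) \<Rightarrow> (nat \<Rightarrow> 's \<Rightarrow> 'a \<Rightarrow> 's pmf)
    \<Rightarrow> nat \<Rightarrow> nat \<Rightarrow> (nat \<Rightarrow> ('s,'a) episode) pmf" where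
  "dataset_pmf init mu P H m = Pi_pmf {..<m} [] (\<lambda>_. episode_pmf init mu P H)"

definition st :: "('s,'a) episode \<Rightarrow> nat \<Rightarrow> 's" where "st e t = fst (e ! (t - 1))"
definition act :: "('s,'a) episode \<Rightarrow> nat \<Rightarrow> 'a" where "act e t = fst (snd (e ! (t - 1)))"
definition nxt :: "('s,'a) episode \<Rightarrow> nat \<Rightarrow> 's" where "nxt e t = snd (snd (e ! (t - 1)))"

definition occ :: "'s pmf \<Rightarrow> (nat \<Rightarrow> 's \<Rightarrow> 'a pmf) \<Rightarrow> (nat \<Rightarrow> 's \<Rightarrow> 'a \<Rightarrow> 's pmf)
    \<Rightarrow> nat \<Rightarrow> nat \<Rightarrow> 's \<Rightarrow> 'a \<Rightarrow> real" where
  "occ init mu P H t s a =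
     measure_pmf.prob (episode_pmf init mu P H) {e. st e t = s \<and> act e t = a}"

definition visits :: "(nat \<Rightarrow> ('s,'a) episode) \<Rightarrow> nat \<Rightarrow> nat \<Rightarrow> 's \<Rightarrow> 'a \<Rightarrow> nat" where
  "visits D m t s a = card {i\<in>{..<m}. st (D i) t = s \<and> act (D i) t = a}"

definition sigmaV :: "(nat \<Rightarrow> 's \<Rightarrow> 'a \<Rightarrow> 's pmf) \<Rightarrow> nat \<Rightarrow> ('s \<Rightarrow> real) \<Rightarrow> 's \<Rightarrow> 'a \<Rightarrow> real" where
  "sigmaV P t V s a = measure_pmf.variance (P t s a) V"

definition sigma_tilde :: "'s pmf \<Rightarrow> (nat \<Rightarrow> 's \<Rightarrow> 'a pmf) \<Rightarrow> (nat \<Rightarrow> 's \<Rightarrow> 'a \<Rightarrow> 's pmf)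
    \<Rightarrow> nat \<Rightarrow> (nat \<Rightarrow> ('s,'a) episode) \<Rightarrow> nat \<Rightarrow> nat \<Rightarrow> ('s \<Rightarrow> real) \<Rightarrow> 's \<Rightarrow> 'a \<Rightarrow> real" where
  "sigma_tilde init mu P H D m t V s a =
     (let n = visits D m t s a;
          I = {i\<in>{..<m}. st (D i) t = s \<and> act (D i) t = a}
      in if real n \<ge> 1/2 * real m * occ init mu P H t s a \<and> n > 0 then
           (let z = (\<Sum>i\<in>I. V (nxt (D i) t)) / real n
            in (\<Sum>i\<in>I. (V (nxt (D i) t))\<^sup>2) / real n - z\<^sup>2)
         else sigmaV P t V s a)"

end

(*
  Fix a step t and a pair (s, a) with occupancy d = d^mu_t(s, a).  For g with values in [0, B],
  each episode contributes the term 1[s_t = s, a_t = a] (g(s_(t+1)) - E_(P_t(s,a)) g); these are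
  i.i.d., bounded by B, centred, and have second moment d Var(g) <= d B^2/4 (Popoviciu).  Bernstein's
  inequality therefore bounds their sum by B sqrt(m d L) + 2 B L outside an event of probability
  2 exp(-L).  Apply this to g = V (sum S1) and to g = (V - E V)^2 (sum S2).  When the estimator is
  not the fallback, n >= m d / 2 visits occurred and recentring the empirical variance at E V gives
  sigma_tilde - sigma = S2/n - (S1/n)^2, which the two bounds make at most
  6 H^2 sqrt(L/(m d)) + 4 H^2 L/(m d).  A union bound over the H S A triples with
  L = log(4 H S A / delta) costs 4 H S A exp(-L) = delta.
*)
theory Submission
  imports Defs
begin

lemma exp_le_one_plus_square:
  fixes y :: real
  assumes "y \<le> 1"
  shows "exp y \<le> 1 + y + y\<^sup>2"
proof (cases "0 \<le> y")
  case True
  then show ?thesis using exp_bound assms by blast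
next
  case False
  have "1 - y \<le> exp (- y)" using exp_ge_add_one_self[of "- y"] by simp
  then have "exp y \<le> 1 / (1 - y)" using False by (simp add: exp_minus field_simps)
  also have "\<dots> \<le> 1 + y + y\<^sup>2"
  proof -
    have "(1 + y + y\<^sup>2) * (1 - y) = 1 - y ^ 3"
      by (simp add: algebra_simps power2_eq_square power3_eq_cube)
    also have "\<dots> \<ge> 1" using False by (simp add: power_less_zero_eq)
    finally show ?thesis using False by (simp add: field_simps)
  qed
  finally show ?thesis .
qed

lemma integrable_measure_pmf_bounded:
  fixes f :: "'b \<Rightarrow> real"
  assumes "\<And>x. \<bar>f x\<bar> \<le> B"
  shows "integrable (measure_pmf M) f"
  by (rule measure_pmf.integrable_const_bound[where B = B]) (use assms in auto)

lemma expectation_pmf_bounds: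
  fixes g :: "'b \<Rightarrow> real"
  assumes "\<And>z. a \<le> g z" and "\<And>z. g z \<le> b"
  shows "a \<le> measure_pmf.expectation M g" and "measure_pmf.expectation M g \<le> b"
proof -
  have "\<bar>g z\<bar> \<le> \<bar>a\<bar> + \<bar>b\<bar>" for z
    using assms(1)[of z] assms(2)[of z] by linarith
  then have "integrable (measure_pmf M) g"
    by (rule integrable_measure_pmf_bounded)
  then show "a \<le> measure_pmf.expectation M g" "measure_pmf.expectation M g \<le> b"
    by (auto intro!: measure_pmf.integral_ge_const measure_pmf.integral_le_const simp: assms)
qed

lemma variance_pmf_le_quarter_square:
  fixes g :: "'b \<Rightarrow> real"
  assumes g0: "\<And>z. 0 \<le> g z" and gB: "\<And>z. g z \<le> B"
  shows "measure_pmf.variance M g \<le> B\<^sup>2 / 4"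
proof -
  define c where "c = measure_pmf.expectation M g"
  have bg: "\<bar>g z\<bar> \<le> B" for z using g0[of z] gB[of z] by simp
  have bg2: "\<bar>(g z)\<^sup>2\<bar> \<le> B\<^sup>2" for z using g0[of z] gB[of z] by (simp add: power_mono)
  have int: "integrable (measure_pmf M) g" "integrable (measure_pmf M) (\<lambda>z. (g z)\<^sup>2)"
    using integrable_measure_pmf_bounded[where f = g, OF bg]
      integrable_measure_pmf_bounded[where f = "\<lambda>z. (g z)\<^sup>2", OF bg2] .
  have "measure_pmf.expectation M (\<lambda>z. (g z)\<^sup>2) \<le> measure_pmf.expectation M (\<lambda>z. B * g z)"
    by (rule integral_mono) (use int g0 gB in \<open>auto simp: power2_eq_square mult_right_mono\<close>)
  then have "measure_pmf.variance M g \<le> c * (B - c)"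
    using int by (simp add: measure_pmf.variance_eq c_def power2_eq_square algebra_simps)
  also have "\<dots> \<le> B\<^sup>2 / 4" by (rule mult_const_minus_self_real_le)
  finally show ?thesis .
qed

lemma abs_sub_expectation_pmf_le:
  fixes g :: "'b \<Rightarrow> real"
  assumes "\<And>z. 0 \<le> g z" and "\<And>z. g z \<le> B"
  shows "\<bar>g z - measure_pmf.expectation M g\<bar> \<le> B"
  using expectation_pmf_bounds[where g = g and M = M, OF assms] assms[of z] by (simp add: abs_le_iff)

lemma square_sub_expectation_pmf_le:
  fixes g :: "'b \<Rightarrow> real"
  assumes "\<And>z. 0 \<le> g z" and "\<And>z. g z \<le> B"
  shows "(g z - measure_pmf.expectation M g)\<^sup>2 \<le> B\<^sup>2"
  using power_mono[OF abs_sub_expectation_pmf_le[where g = g and z = z and M = M, OF assms] abs_ge_zero, of 2]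
  by simp

lemma expectation_exp_le_exp_variance:
  fixes f :: "'b \<Rightarrow> real"
  assumes bnd: "\<And>x. \<bar>f x\<bar> \<le> b" and mean: "measure_pmf.expectation M f = 0"
    and var: "measure_pmf.expectation M (\<lambda>x. (f x)\<^sup>2) \<le> v"
    and l: "0 \<le> l" "l * b \<le> 1"
  shows "measure_pmf.expectation M (\<lambda>x. exp (l * f x)) \<le> exp (l\<^sup>2 * v)"
proof -
  have lf: "l * f x \<le> 1" for x
    using mult_left_mono[OF _ l(1), of "f x" b] bnd[of x] l(2) by (simp add: abs_le_iff)
  have i1: "integrable (measure_pmf M) f" by (rule integrable_measure_pmf_bounded[OF bnd])
  have i2: "integrable (measure_pmf M) (\<lambda>x. (f x)\<^sup>2)"
    by (rule integrable_measure_pmf_bounded[where B = "b\<^sup>2"])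
       (use bnd in \<open>metis abs_ge_zero abs_power2 power2_abs power_mono\<close>)
  have "measure_pmf.expectation M (\<lambda>x. exp (l * f x))
      \<le> measure_pmf.expectation M (\<lambda>x. 1 + l * f x + l\<^sup>2 * (f x)\<^sup>2)"
  proof (rule integral_mono)
    show "integrable (measure_pmf M) (\<lambda>x. exp (l * f x))"
      by (rule integrable_measure_pmf_bounded[where B = "exp 1"]) (use lf in auto)
    show "integrable (measure_pmf M) (\<lambda>x. 1 + l * f x + l\<^sup>2 * (f x)\<^sup>2)"
      using i1 i2 by auto
    show "exp (l * f x) \<le> 1 + l * f x + l\<^sup>2 * (f x)\<^sup>2" for x
      using exp_le_one_plus_square[OF lf[of x]] by (simp add: power_mult_distrib)
  qed
  also have "\<dots> = 1 + l\<^sup>2 * measure_pmf.expectation M (\<lambda>x. (f x)\<^sup>2)"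
    using i1 i2 mean by simp
  also have "\<dots> \<le> 1 + l\<^sup>2 * v" using var by (simp add: mult_left_mono)
  also have "\<dots> \<le> exp (l\<^sup>2 * v)" by (rule exp_ge_add_one_self)
  finally show ?thesis .
qed

lemma prob_Pi_pmf_sum_ge_le:
  fixes f :: "'b \<Rightarrow> real"
  assumes A: "finite A" and bnd: "\<And>x. \<bar>f x\<bar> \<le> b" and mean: "measure_pmf.expectation M f = 0"
    and var: "measure_pmf.expectation M (\<lambda>x. (f x)\<^sup>2) \<le> v"
    and l: "0 < l" "l * b \<le> 1"
  shows "measure_pmf.prob (Pi_pmf A dflt (\<lambda>_. M)) {D. \<epsilon> \<le> (\<Sum>i\<in>A. f (D i))}
          \<le> exp (- l * \<epsilon> + real (card A) * l\<^sup>2 * v)"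
proof -
  let ?\<Pi> = "Pi_pmf A dflt (\<lambda>_. M)"
  let ?mgf = "\<lambda>D. \<Prod>i\<in>A. exp (l * f (D i))"
  have "\<bar>exp (l * f x)\<bar> \<le> exp (l * b)" for x
    using abs_le_D1[OF bnd[of x]] l by (simp add: mult_left_mono)
  then have int: "integrable (measure_pmf M) (\<lambda>x. exp (l * f x))"
    by (rule integrable_measure_pmf_bounded)
  have "measure_pmf.prob ?\<Pi> {D. \<epsilon> \<le> (\<Sum>i\<in>A. f (D i))}
      = measure_pmf.expectation ?\<Pi> (indicator {D. \<epsilon> \<le> (\<Sum>i\<in>A. f (D i))})"
    by (simp add: measure_pmf.emeasure_finite)
  also have "\<dots> \<le> measure_pmf.expectation ?\<Pi> (\<lambda>D. exp (- l * \<epsilon>) * ?mgf D)"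
  proof (rule integral_mono)
    show "integrable (measure_pmf ?\<Pi>) (\<lambda>D. exp (- l * \<epsilon>) * ?mgf D)"
      using integrable_prod_Pi_pmf[where f = "\<lambda>_ x. exp (l * f x)", OF A] int by simp
    fix D
    have "exp (- l * \<epsilon>) * ?mgf D = exp (l * ((\<Sum>i\<in>A. f (D i)) - \<epsilon>))"
      using A by (simp add: exp_sum sum_distrib_left exp_diff exp_minus field_simps)
    then show "indicator {D. \<epsilon> \<le> (\<Sum>i\<in>A. f (D i))} D \<le> exp (- l * \<epsilon>) * ?mgf D"
      using l by (auto simp: indicator_def)
  qed (auto intro: integrable_measure_pmf_bounded[where B = 1] simp: indicator_def)
  also have "\<dots> = exp (- l * \<epsilon>) * (measure_pmf.expectation M (\<lambda>x. exp (l * f x))) ^ card A"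
    using expectation_prod_Pi_pmf[where f = "\<lambda>_ x. exp (l * f x)", OF A] int by simp
  also have "\<dots> \<le> exp (- l * \<epsilon>) * (exp (l\<^sup>2 * v)) ^ card A"
    using expectation_exp_le_exp_variance[OF bnd mean var _ l(2)] l
    by (auto intro!: power_mono integral_nonneg_AE)
  also have "\<dots> = exp (- l * \<epsilon> + real (card A) * l\<^sup>2 * v)"
    by (simp add: exp_of_nat_mult[symmetric] mult.assoc flip: exp_add)
  finally show ?thesis .
qed

lemma bernstein_Pi_pmf:
  fixes f :: "'b \<Rightarrow> real"
  assumes A: "finite A" and b: "0 < b" and bnd: "\<And>x. \<bar>f x\<bar> \<le> b"
    and mean: "measure_pmf.expectation M f = 0"
    and var: "measure_pmf.expectation M (\<lambda>x. (f x)\<^sup>2) \<le> v" and L: "0 < L"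
  shows "measure_pmf.prob (Pi_pmf A dflt (\<lambda>_. M))
           {D. 2 * sqrt (real (card A) * v * L) + 2 * b * L \<le> (\<Sum>i\<in>A. f (D i))} \<le> exp (- L)"
proof -
  define n where "n = real (card A)"
  define \<epsilon> where "\<epsilon> = 2 * sqrt (n * v * L) + 2 * b * L"
  have "0 \<le> measure_pmf.expectation M (\<lambda>x. (f x)\<^sup>2)" by (rule integral_nonneg_AE) simp
  with var have v: "0 \<le> v" by linarith
  have n: "0 \<le> n" by (simp add: n_def)
  \<comment> \<open>the Chernoff exponent is optimised by \<open>l = min (1 / b) (sqrt (L / (n * v)))\<close>\<close>
  obtain l where l: "0 < l" "l * b \<le> 1" and exponent: "- l * \<epsilon> + n * l\<^sup>2 * v \<le> - L"
  proof (cases "n * v \<le> L * b\<^sup>2")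
    case True
    have "- (1 / b) * \<epsilon> + n * (1 / b)\<^sup>2 * v = - 2 * sqrt (n * v * L) / b - 2 * L + n * v / b\<^sup>2"
      using b by (simp add: \<epsilon>_def field_simps power2_eq_square)
    also have "\<dots> \<le> - 2 * L + n * v / b\<^sup>2" using b n v L by simp
    also have "n * v / b\<^sup>2 \<le> L" using True b by (simp add: field_simps)
    finally show thesis using b by (intro that[of "1 / b"]) auto
  next
    case False
    moreover have "0 \<le> L * b\<^sup>2" using L by simp
    ultimately have nv: "0 < n * v" by linarith
    define l where "l = sqrt (L / (n * v))"
    have nz: "n \<noteq> 0" "v \<noteq> 0" using nv by auto
    have l0: "0 < l" and l2: "l\<^sup>2 = L / (n * v)" using nv L by (simp_all add: l_def)
    have "(l * b)\<^sup>2 \<le> 1" using False nv by (simp add: power_mult_distrib l2 field_simps)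
    then have lb: "l * b \<le> 1" using power2_le_imp_le[of "l * b" 1] by simp
    have "l * sqrt (n * v * L) = L"
      using nv nz L by (simp add: l_def real_sqrt_mult[symmetric] field_simps)
    then have "- l * \<epsilon> + n * l\<^sup>2 * v = - L - 2 * l * b * L"
      using nz by (simp add: \<epsilon>_def l2 algebra_simps)
    also have "\<dots> \<le> - L" using l0 b L by simp
    finally show thesis using l0 lb by (intro that)
  qed
  have "measure_pmf.prob (Pi_pmf A dflt (\<lambda>_. M)) {D. \<epsilon> \<le> (\<Sum>i\<in>A. f (D i))}
          \<le> exp (- l * \<epsilon> + n * l\<^sup>2 * v)"
    unfolding n_def by (rule prob_Pi_pmf_sum_ge_le[OF A bnd mean var l])
  also have "\<dots> \<le> exp (- L)" using exponent by simp
  finally show ?thesis by (simp add: \<epsilon>_def n_def)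
qed

lemma bernstein_abs_Pi_pmf:
  fixes f :: "'b \<Rightarrow> real"
  assumes A: "finite A" and b: "0 < b" and bnd: "\<And>x. \<bar>f x\<bar> \<le> b"
    and mean: "measure_pmf.expectation M f = 0"
    and var: "measure_pmf.expectation M (\<lambda>x. (f x)\<^sup>2) \<le> v" and L: "0 < L"
  shows "measure_pmf.prob (Pi_pmf A dflt (\<lambda>_. M))
           {D. 2 * sqrt (real (card A) * v * L) + 2 * b * L \<le> \<bar>\<Sum>i\<in>A. f (D i)\<bar>} \<le> 2 * exp (- L)"
proof -
  let ?\<Pi> = "Pi_pmf A dflt (\<lambda>_. M)"
  let ?\<epsilon> = "2 * sqrt (real (card A) * v * L) + 2 * b * L"
  have "{D. ?\<epsilon> \<le> \<bar>\<Sum>i\<in>A. f (D i)\<bar>}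
      \<subseteq> {D. ?\<epsilon> \<le> (\<Sum>i\<in>A. f (D i))} \<union> {D. ?\<epsilon> \<le> (\<Sum>i\<in>A. - f (D i))}"
    by (auto simp: sum_negf abs_if)
  then have "measure_pmf.prob ?\<Pi> {D. ?\<epsilon> \<le> \<bar>\<Sum>i\<in>A. f (D i)\<bar>}
      \<le> measure_pmf.prob ?\<Pi> {D. ?\<epsilon> \<le> (\<Sum>i\<in>A. f (D i))} + measure_pmf.prob ?\<Pi> {D. ?\<epsilon> \<le> (\<Sum>i\<in>A. - f (D i))}"
    by (intro order_trans[OF measure_pmf.finite_measure_mono measure_Un_le]) simp_all
  also have "\<dots> \<le> exp (- L) + exp (- L)"
    by (intro add_mono bernstein_Pi_pmf[OF A b _ _ _ L]) (use bnd mean var in auto)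
  finally show ?thesis by simp
qed

definition step_pmf :: "(nat \<Rightarrow> 's \<Rightarrow> 'a pmf) \<Rightarrow> (nat \<Rightarrow> 's \<Rightarrow> 'a \<Rightarrow> 's pmf) \<Rightarrow> nat \<Rightarrow> 's
    \<Rightarrow> ('s \<times> 'a \<times> 's) pmf" where
  "step_pmf mu P t s = bind_pmf (mu t s) (\<lambda>a. map_pmf (\<lambda>s'. (s, a, s')) (P t s a))"

lemma traj_from_Suc_step_pmf:
  "traj_from mu P t (Suc k) s =
     bind_pmf (step_pmf mu P t s) (\<lambda>x. map_pmf ((#) x) (traj_from mu P (Suc t) k (snd (snd x))))"
  by (simp add: step_pmf_def bind_assoc_pmf bind_map_pmf)

lemma traj_from_nth_step_pmf:
  assumes "i < k"
  shows "\<exists>Q. map_pmf (\<lambda>e. e ! i) (traj_from mu P t k s) = bind_pmf Q (step_pmf mu P (t + i))"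
  using assms
proof (induction i arbitrary: t k s)
  case 0
  then obtain k' where "k = Suc k'" by (cases k) auto
  then have "map_pmf (\<lambda>e. e ! 0) (traj_from mu P t k s) = step_pmf mu P t s"
    by (simp add: traj_from_Suc_step_pmf map_bind_pmf map_pmf_comp bind_return_pmf' del: traj_from.simps)
  then show ?case by (metis add_0_right bind_return_pmf)
next
  case (Suc i)
  then obtain k' where k: "k = Suc k'" and "i < k'" by (cases k) auto
  with Suc.IH obtain Q where Q: "\<And>s'. map_pmf (\<lambda>e. e ! i) (traj_from mu P (Suc t) k' s')
      = bind_pmf (Q s') (step_pmf mu P (Suc t + i))"
    by metis
  have "map_pmf (\<lambda>e. e ! Suc i) (traj_from mu P t k s)
      = bind_pmf (bind_pmf (step_pmf mu P t s) (\<lambda>x. Q (snd (snd x)))) (step_pmf mu P (t + Suc i))"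
    by (simp add: k traj_from_Suc_step_pmf map_bind_pmf map_pmf_comp Q bind_assoc_pmf del: traj_from.simps)
  then show ?case by blast
qed

lemma episode_pmf_nth_step_pmf:
  assumes "t \<in> {1..H}"
  shows "\<exists>Q. map_pmf (\<lambda>e. e ! (t - 1)) (episode_pmf init mu P H) = bind_pmf Q (step_pmf mu P t)"
proof -
  have "\<forall>s. \<exists>Q. map_pmf (\<lambda>e. e ! (t - 1)) (traj_from mu P 1 H s) = bind_pmf Q (step_pmf mu P t)"
    using traj_from_nth_step_pmf[of "t - 1" H mu P 1] assms by auto
  then obtain Q where "\<And>s. map_pmf (\<lambda>e. e ! (t - 1)) (traj_from mu P 1 H s) = bind_pmf (Q s) (step_pmf mu P t)"
    by metis
  then have "map_pmf (\<lambda>e. e ! (t - 1)) (episode_pmf init mu P H) = bind_pmf (bind_pmf init Q) (step_pmf mu P t)"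
    by (simp add: episode_pmf_def map_bind_pmf bind_assoc_pmf)
  then show ?thesis by blast
qed

lemma expectation_step_pmf_visit:
  fixes mu :: "nat \<Rightarrow> 's::finite \<Rightarrow> 'a::finite pmf"
  shows "measure_pmf.expectation (step_pmf mu P t x) (\<lambda>(x', b, z). if x' = s \<and> b = a then g z else 0)
       = (if x = s then pmf (mu t s) a * measure_pmf.expectation (P t s a) g else 0)"
proof -
  have "measure_pmf.expectation (step_pmf mu P t x) (\<lambda>(x', b, z). if x' = s \<and> b = a then g z else 0)
      = (\<Sum>b\<in>UNIV. pmf (mu t x) b * measure_pmf.expectation (P t x b) (\<lambda>z. if x = s \<and> b = a then g z else 0))"
    unfolding step_pmf_def by (subst pmf_expectation_bind[where A = UNIV]) auto
  also have "\<dots> = (\<Sum>b\<in>UNIV. if x = s \<and> b = a then pmf (mu t s) a * measure_pmf.expectation (P t s a) g else 0)"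
    by (intro sum.cong) auto
  finally show ?thesis by (simp add: sum.delta)
qed

lemma expectation_episode_visit:
  fixes init :: "'s::finite pmf" and mu :: "nat \<Rightarrow> 's \<Rightarrow> 'a::finite pmf"
  assumes "t \<in> {1..H}"
  shows "measure_pmf.expectation (episode_pmf init mu P H)
           (\<lambda>e. if st e t = s \<and> act e t = a then g (nxt e t) else 0)
         = occ init mu P H t s a * measure_pmf.expectation (P t s a) g"
proof -
  obtain Q where Q: "map_pmf (\<lambda>e. e ! (t - 1)) (episode_pmf init mu P H) = bind_pmf Q (step_pmf mu P t)"
    using episode_pmf_nth_step_pmf[OF assms] by blast
  have visit: "measure_pmf.expectation (episode_pmf init mu P H)
        (\<lambda>e. if st e t = s \<and> act e t = a then h (nxt e t) else 0)
      = pmf Q s * pmf (mu t s) a * measure_pmf.expectation (P t s a) h" for h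
  proof -
    have "(\<lambda>e. if st e t = s \<and> act e t = a then h (nxt e t) else 0)
        = (\<lambda>(x, b, z). if x = s \<and> b = a then h z else 0) \<circ> (\<lambda>e. e ! (t - 1))"
      \<comment> \<open>unqualified, \<open>nxt_def\<close> would name the next-time operator on streams\<close>
      by (auto simp: st_def act_def Defs.nxt_def split: prod.splits)
    then have "measure_pmf.expectation (episode_pmf init mu P H)
          (\<lambda>e. if st e t = s \<and> act e t = a then h (nxt e t) else 0)
        = measure_pmf.expectation (bind_pmf Q (step_pmf mu P t)) (\<lambda>(x, b, z). if x = s \<and> b = a then h z else 0)"
      by (simp add: Q[symmetric] comp_def)
    also have "\<dots> = (\<Sum>x\<in>UNIV. pmf Q x * (if x = s then pmf (mu t s) a * measure_pmf.expectation (P t s a) h else 0))"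
      by (subst pmf_expectation_bind[where A = UNIV]) (simp_all add: expectation_step_pmf_visit)
    finally show ?thesis by (simp add: if_distrib sum.delta cong: if_cong)
  qed
  have "occ init mu P H t s a
      = measure_pmf.expectation (episode_pmf init mu P H) (indicator {e. st e t = s \<and> act e t = a})"
    unfolding occ_def by (simp add: measure_pmf.emeasure_finite)
  also have "indicator {e. st e t = s \<and> act e t = a}
      = (\<lambda>e. if st e t = s \<and> act e t = a then (\<lambda>_. 1::real) (nxt e t) else 0)"
    by (auto simp: indicator_def)
  finally have "occ init mu P H t s a = pmf Q s * pmf (mu t s) a"
    using visit[of "\<lambda>_. 1"] by simp
  then show ?thesis using visit[of g] by simp
qed

definition visit_dev :: "nat \<Rightarrow> 's \<Rightarrow> 'a \<Rightarrow> ('s \<Rightarrow> real) \<Rightarrow> real \<Rightarrow> ('s, 'a) episode \<Rightarrow> real" where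
  "visit_dev t s a g c e = (if st e t = s \<and> act e t = a then g (nxt e t) - c else 0)"

lemma prob_abs_sum_visit_dev_ge:
  fixes init :: "'s::finite pmf" and mu :: "nat \<Rightarrow> 's \<Rightarrow> 'a::finite pmf" and g :: "'s \<Rightarrow> real"
  assumes t: "t \<in> {1..H}" and g0: "\<And>z. 0 \<le> g z" and gB: "\<And>z. g z \<le> B" and B: "0 < B"
    and L: "0 < L"
  shows "measure_pmf.prob (dataset_pmf init mu P H m)
           {D. B * sqrt (real m * occ init mu P H t s a * L) + 2 * B * L
                 \<le> \<bar>\<Sum>i<m. visit_dev t s a g (measure_pmf.expectation (P t s a) g) (D i)\<bar>}
         \<le> 2 * exp (- L)"
proof -
  define c where "c = measure_pmf.expectation (P t s a) g"
  define d where "d = occ init mu P H t s a"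
  let ?E = "episode_pmf init mu P H"
  have d: "0 \<le> d" by (simp add: d_def occ_def)
  have bnd: "\<bar>visit_dev t s a g c e\<bar> \<le> B" for e
    using abs_sub_expectation_pmf_le[where g = g and M = "P t s a", OF g0 gB] B
    by (simp add: visit_dev_def c_def)
  have int: "integrable (measure_pmf (P t s a)) g"
    by (rule integrable_measure_pmf_bounded[where B = B]) (use g0 gB in \<open>simp add: abs_le_iff\<close>)
  have "measure_pmf.expectation ?E (visit_dev t s a g c) = d * measure_pmf.expectation (P t s a) (\<lambda>z. g z - c)"
    unfolding visit_dev_def d_def by (rule expectation_episode_visit[OF t])
  also have "\<dots> = 0" using int by (simp add: c_def)
  finally have mean: "measure_pmf.expectation ?E (visit_dev t s a g c) = 0" .
  have "(\<lambda>e. (visit_dev t s a g c e)\<^sup>2)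
      = (\<lambda>e. if st e t = s \<and> act e t = a then (\<lambda>z. (g z - c)\<^sup>2) (nxt e t) else 0)"
    by (auto simp: visit_dev_def)
  then have "measure_pmf.expectation ?E (\<lambda>e. (visit_dev t s a g c e)\<^sup>2)
      = d * measure_pmf.expectation (P t s a) (\<lambda>z. (g z - c)\<^sup>2)"
    using expectation_episode_visit[OF t] by (simp add: d_def)
  also have "\<dots> \<le> d * B\<^sup>2 / 4"
    using mult_left_mono[OF variance_pmf_le_quarter_square[where g = g, OF g0 gB] d] by (simp add: c_def)
  finally have var: "measure_pmf.expectation ?E (\<lambda>e. (visit_dev t s a g c e)\<^sup>2) \<le> d * B\<^sup>2 / 4" .
  have "2 * sqrt (real m * (d * B\<^sup>2 / 4) * L) = B * sqrt (real m * d * L)"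
    using B by (simp add: real_sqrt_mult real_sqrt_divide)
  then show ?thesis
    using bernstein_abs_Pi_pmf[where A = "{..<m}" and dflt = "[]", OF _ B bnd mean var L]
    by (simp add: dataset_pmf_def c_def d_def)
qed

lemma empirical_variance_recentre:
  fixes x :: "'i \<Rightarrow> real"
  assumes "finite J" and "J \<noteq> {}"
  shows "(\<Sum>i\<in>J. (x i)\<^sup>2) / card J - ((\<Sum>i\<in>J. x i) / card J)\<^sup>2 - \<sigma>
       = (\<Sum>i\<in>J. (x i - \<mu>)\<^sup>2 - \<sigma>) / card J - ((\<Sum>i\<in>J. x i - \<mu>) / card J)\<^sup>2"
proof -
  define n where "n = real (card J)"
  have n: "n \<noteq> 0" using assms by (simp add: n_def)
  have sum1: "(\<Sum>i\<in>J. x i - \<mu>) = (\<Sum>i\<in>J. x i) - n * \<mu>"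
    by (simp add: sum_subtractf n_def)
  have "(\<Sum>i\<in>J. (x i - \<mu>)\<^sup>2 - \<sigma>) = (\<Sum>i\<in>J. (x i)\<^sup>2 - 2 * \<mu> * x i + \<mu>\<^sup>2 - \<sigma>)"
    by (rule sum.cong) (auto simp: power2_diff)
  also have "\<dots> = (\<Sum>i\<in>J. (x i)\<^sup>2) - 2 * \<mu> * (\<Sum>i\<in>J. x i) + n * \<mu>\<^sup>2 - n * \<sigma>"
    by (simp add: sum_subtractf sum.distrib sum_distrib_left n_def)
  finally have sum2: "(\<Sum>i\<in>J. (x i - \<mu>)\<^sup>2 - \<sigma>) = \<dots>" .
  show ?thesis
    unfolding sum1 sum2 n_def[symmetric] using n by (simp add: field_simps power2_eq_square)
qed

lemma abs_div_le_of_bernstein_radius: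
  fixes S n u c L :: real
  assumes u: "0 < u" "u \<le> 2 * n" and S: "\<bar>S\<bar> \<le> c * sqrt (u * L) + 2 * c * L"
  shows "\<bar>S / n\<bar> \<le> 2 * c * sqrt (L / u) + 4 * c * (L / u)"
proof -
  have "\<bar>S / n\<bar> \<le> \<bar>S\<bar> / (u / 2)"
    unfolding abs_divide using u by (intro frac_le) auto
  also have "\<dots> \<le> (c * sqrt (u * L) + 2 * c * L) / (u / 2)"
    using S u by (simp add: divide_right_mono)
  also have "sqrt (u * L) = u * sqrt (L / u)"
  proof -
    have "sqrt (u * L) = sqrt (u\<^sup>2 * (L / u))" using u by (simp add: power2_eq_square)
    also have "\<dots> = u * sqrt (L / u)" using u by (subst real_sqrt_mult) simp
    finally show ?thesis .
  qed
  finally show ?thesis using u by (simp add: field_simps)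
qed

lemma abs_sub_square_le:
  fixes y1 y2 h X :: real
  assumes h: "0 \<le> h" and X: "0 \<le> X"
    and y1: "\<bar>y1\<bar> \<le> h" "\<bar>y1\<bar> \<le> 2 * h * X + 4 * h * X\<^sup>2"
    and y2: "\<bar>y2\<bar> \<le> h\<^sup>2" "\<bar>y2\<bar> \<le> 2 * h\<^sup>2 * X + 4 * h\<^sup>2 * X\<^sup>2"
  shows "\<bar>y2 - y1\<^sup>2\<bar> \<le> 6 * h\<^sup>2 * X + 4 * h\<^sup>2 * X\<^sup>2"
proof -
  have "\<bar>y2 - y1\<^sup>2\<bar> \<le> \<bar>y2\<bar> + \<bar>y1\<bar>\<^sup>2" by (simp add: abs_triangle_ineq4[of y2 "y1\<^sup>2", simplified])
  also have "\<dots> \<le> 6 * h\<^sup>2 * X + 4 * h\<^sup>2 * X\<^sup>2"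
  proof (cases "1 / 3 \<le> X")
    case True
    have "\<bar>y1\<bar>\<^sup>2 \<le> h\<^sup>2" using y1(1) by (metis abs_ge_zero power_mono)
    then have "\<bar>y2\<bar> + \<bar>y1\<bar>\<^sup>2 \<le> 6 * h\<^sup>2 * (1 / 3)" using y2(1) by simp
    also have "\<dots> \<le> 6 * h\<^sup>2 * X" using True by (intro mult_left_mono) auto
    finally show ?thesis by (simp add: add_increasing2)
  next
    case False
    have "X\<^sup>2 \<le> X / 2"
      using mult_left_mono[of "2 * X" 1 X] False X by (simp add: power2_eq_square algebra_simps)
    then have "h\<^sup>2 * X\<^sup>2 \<le> h\<^sup>2 * (X / 2)" by (rule mult_left_mono) simp
    moreover have "\<bar>y1\<bar>\<^sup>2 \<le> h * (2 * h * X + 4 * h * X\<^sup>2)"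
      unfolding power2_eq_square[of "\<bar>y1\<bar>"] by (rule mult_mono[OF y1 h abs_ge_zero])
    ultimately show ?thesis using y2(2) by (simp add: algebra_simps power2_eq_square)
  qed
  finally show ?thesis .
qed

definition visitors :: "(nat \<Rightarrow> ('s, 'a) episode) \<Rightarrow> nat \<Rightarrow> nat \<Rightarrow> 's \<Rightarrow> 'a \<Rightarrow> nat set" where
  "visitors D m t s a = {i\<in>{..<m}. st (D i) t = s \<and> act (D i) t = a}"

lemma sum_visit_dev_eq:
  "(\<Sum>i<m. visit_dev t s a g c (D i)) = (\<Sum>i\<in>visitors D m t s a. g (nxt (D i) t) - c)"
  unfolding visitors_def visit_dev_def by (rule sum.inter_filter[symmetric]) simp

lemma abs_sum_visit_dev_le:
  assumes "\<And>z. \<bar>g z - c\<bar> \<le> B"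
  shows "\<bar>\<Sum>i<m. visit_dev t s a g c (D i)\<bar> \<le> real (visits D m t s a) * B"
proof -
  have "\<bar>\<Sum>i<m. visit_dev t s a g c (D i)\<bar> \<le> (\<Sum>i\<in>visitors D m t s a. \<bar>g (nxt (D i) t) - c\<bar>)"
    unfolding sum_visit_dev_eq by (rule sum_abs)
  also have "\<dots> \<le> (\<Sum>i\<in>visitors D m t s a. B)" by (intro sum_mono assms)
  finally show ?thesis by (simp add: visits_def visitors_def)
qed

lemma sigma_tilde_sub_sigmaV_eq:
  fixes V :: "'s \<Rightarrow> real" and \<mu> :: real
    and D :: "nat \<Rightarrow> ('s, 'a) episode" and m t :: nat and s :: 's and a :: 'a
  defines "n \<equiv> real (visits D m t s a)"
  assumes "1 / 2 * real m * occ init mu P H t s a \<le> n" and "0 < n"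
  shows "sigma_tilde init mu P H D m t V s a - sigmaV P t V s a
       = (\<Sum>i<m. visit_dev t s a (\<lambda>z. (V z - \<mu>)\<^sup>2) (sigmaV P t V s a) (D i)) / n
         - ((\<Sum>i<m. visit_dev t s a V \<mu> (D i)) / n)\<^sup>2"
proof -
  define J where "J = visitors D m t s a"
  define x where "x i = V (nxt (D i) t)" for i
  have J: "finite J" "real (card J) = n" by (simp_all add: J_def visitors_def n_def visits_def)
  with assms(3) have "J \<noteq> {}" by auto
  have "sigma_tilde init mu P H D m t V s a = (\<Sum>i\<in>J. (x i)\<^sup>2) / n - ((\<Sum>i\<in>J. x i) / n)\<^sup>2"
    unfolding sigma_tilde_def Let_def visitors_def[symmetric] J_def[symmetric] x_def
    using assms(2,3) by (simp add: n_def)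
  then show ?thesis
    using empirical_variance_recentre[OF J(1) \<open>J \<noteq> {}\<close>, of x "sigmaV P t V s a" \<mu>]
    by (simp add: J(2) sum_visit_dev_eq J_def[symmetric] x_def)
qed

lemma sigma_tilde_error_le:
  fixes init :: "'s pmf" and mu :: "nat \<Rightarrow> 's \<Rightarrow> 'a pmf" and P :: "nat \<Rightarrow> 's \<Rightarrow> 'a \<Rightarrow> 's pmf"
    and V :: "'s \<Rightarrow> real" and H t :: nat and s :: 's and a :: 'a
  defines "\<mu> \<equiv> measure_pmf.expectation (P t s a) V" and "d \<equiv> occ init mu P H t s a"
  assumes V0: "\<And>z. 0 \<le> V z" and VH: "\<And>z. V z \<le> real H" and L: "0 \<le> L" and d: "0 < d"
    and dev1: "\<bar>\<Sum>i<m. visit_dev t s a V \<mu> (D i)\<bar>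
      \<le> real H * sqrt (real m * d * L) + 2 * real H * L"
    and dev2: "\<bar>\<Sum>i<m. visit_dev t s a (\<lambda>z. (V z - \<mu>)\<^sup>2) (sigmaV P t V s a) (D i)\<bar>
      \<le> (real H)\<^sup>2 * sqrt (real m * d * L) + 2 * (real H)\<^sup>2 * L"
  shows "\<bar>sigma_tilde init mu P H D m t V s a - sigmaV P t V s a\<bar>
           \<le> 6 * (real H)\<^sup>2 * sqrt (L / (real m * d)) + 4 * (real H)\<^sup>2 * L / (real m * d)"
proof (cases "1 / 2 * real m * d \<le> real (visits D m t s a) \<and> 0 < visits D m t s a")
  case False
  have "sigma_tilde init mu P H D m t V s a = sigmaV P t V s a"
    unfolding sigma_tilde_def Let_def d_def[symmetric] using False by (rule if_not_P)
  then show ?thesis using L d by simp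
next
  case True
  define n where "n = real (visits D m t s a)"
  define S1 where "S1 = (\<Sum>i<m. visit_dev t s a V \<mu> (D i))"
  define S2 where "S2 = (\<Sum>i<m. visit_dev t s a (\<lambda>z. (V z - \<mu>)\<^sup>2) (sigmaV P t V s a) (D i))"
  have n: "0 < n" "real m * d \<le> 2 * n" using True by (auto simp: n_def)
  have "0 < m" using True by (auto simp: visits_def intro: Nat.gr0I)
  then have u: "0 < real m * d" using d by simp
  have "\<bar>V z - \<mu>\<bar> \<le> real H" for z
    unfolding \<mu>_def by (rule abs_sub_expectation_pmf_le[OF V0 VH])
  moreover have "\<bar>(V z - \<mu>)\<^sup>2 - sigmaV P t V s a\<bar> \<le> (real H)\<^sup>2" for z
  proof -
    have "0 \<le> (V z - \<mu>)\<^sup>2" "(V z - \<mu>)\<^sup>2 \<le> (real H)\<^sup>2"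
      unfolding \<mu>_def by (simp_all add: square_sub_expectation_pmf_le[where g = V, OF V0 VH])
    moreover have "0 \<le> sigmaV P t V s a" "sigmaV P t V s a \<le> (real H)\<^sup>2 / 4"
      using variance_pmf_le_quarter_square[where g = V and M = "P t s a", OF V0 VH]
      by (simp_all add: sigmaV_def measure_pmf.variance_positive)
    ultimately show ?thesis unfolding abs_le_iff by linarith
  qed
  ultimately have "\<bar>S1\<bar> \<le> n * real H" and "\<bar>S2\<bar> \<le> n * (real H)\<^sup>2"
    unfolding S1_def S2_def n_def by (blast intro: abs_sum_visit_dev_le)+
  moreover have "\<bar>S1 / n\<bar> \<le> 2 * real H * sqrt (L / (real m * d)) + 4 * real H * (L / (real m * d))"
    by (rule abs_div_le_of_bernstein_radius[OF u n(2)]) (use dev1 in \<open>simp_all add: S1_def mult.assoc\<close>)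
  moreover have "\<bar>S2 / n\<bar>
      \<le> 2 * (real H)\<^sup>2 * sqrt (L / (real m * d)) + 4 * (real H)\<^sup>2 * (L / (real m * d))"
    by (rule abs_div_le_of_bernstein_radius[OF u n(2)]) (use dev2 in \<open>simp_all add: S2_def mult.assoc\<close>)
  ultimately have "\<bar>S2 / n - (S1 / n)\<^sup>2\<bar>
      \<le> 6 * (real H)\<^sup>2 * sqrt (L / (real m * d)) + 4 * (real H)\<^sup>2 * (sqrt (L / (real m * d)))\<^sup>2"
    using n L u by (intro abs_sub_square_le) (simp_all add: abs_divide field_simps)
  moreover have "sigma_tilde init mu P H D m t V s a - sigmaV P t V s a = S2 / n - (S1 / n)\<^sup>2"
    unfolding S1_def S2_def n_def using True by (intro sigma_tilde_sub_sigmaV_eq) (simp_all add: d_def)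
  ultimately show ?thesis using L u by simp
qed

lemma prob_sigma_tilde_bound_fails_le:
  fixes init :: "'s::finite pmf" and mu :: "nat \<Rightarrow> 's \<Rightarrow> 'a::finite pmf" and V :: "'s \<Rightarrow> real"
  assumes t: "t \<in> {1..H}" and V0: "\<And>z. 0 \<le> V z" and VH: "\<And>z. V z \<le> real H"
    and H: "0 < H" and L: "0 < L"
  shows "measure_pmf.prob (dataset_pmf init mu P H m)
           {D. \<not> (0 < occ init mu P H t s a \<longrightarrow>
               \<bar>sigma_tilde init mu P H D m t V s a - sigmaV P t V s a\<bar>
                 \<le> 6 * (real H)\<^sup>2 * sqrt (L / (real m * occ init mu P H t s a))
                   + 4 * (real H)\<^sup>2 * L / (real m * occ init mu P H t s a))}
         \<le> 4 * exp (- L)" (is "measure_pmf.prob ?\<Pi> ?fail \<le> _")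
proof -
  define \<mu> where "\<mu> = measure_pmf.expectation (P t s a) V"
  define r where "r = sqrt (real m * occ init mu P H t s a * L)"
  let ?bad1 = "{D. real H * r + 2 * real H * L \<le> \<bar>\<Sum>i<m. visit_dev t s a V \<mu> (D i)\<bar>}"
  let ?bad2 = "{D. (real H)\<^sup>2 * r + 2 * (real H)\<^sup>2 * L
                  \<le> \<bar>\<Sum>i<m. visit_dev t s a (\<lambda>z. (V z - \<mu>)\<^sup>2) (sigmaV P t V s a) (D i)\<bar>}"
  have "?fail \<subseteq> ?bad1 \<union> ?bad2"
    using sigma_tilde_error_le[where V = V, OF V0 VH less_imp_le[OF L]]
    by (force simp: r_def \<mu>_def)
  then have "measure_pmf.prob ?\<Pi> ?fail \<le> measure_pmf.prob ?\<Pi> ?bad1 + measure_pmf.prob ?\<Pi> ?bad2"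
    by (intro order_trans[OF measure_pmf.finite_measure_mono measure_Un_le]) simp_all
  also have "\<dots> \<le> 2 * exp (- L) + 2 * exp (- L)"
    unfolding r_def \<mu>_def sigmaV_def using H L
    by (intro add_mono prob_abs_sum_visit_dev_ge[OF t] square_sub_expectation_pmf_le[OF V0 VH])
      (simp_all add: V0 VH)
  finally show ?thesis by simp
qed

lemma prob_all_ge_union_bound:
  fixes M :: "'b pmf"
  assumes T: "finite T" and p: "\<And>x. x \<in> T \<Longrightarrow> measure_pmf.prob M {\<omega>. \<not> Q x \<omega>} \<le> p"
  shows "1 - real (card T) * p \<le> measure_pmf.prob M {\<omega>. \<forall>x\<in>T. Q x \<omega>}"
proof -
  have "measure_pmf.prob M (\<Union>x\<in>T. {\<omega>. \<not> Q x \<omega>}) \<le> (\<Sum>x\<in>T. measure_pmf.prob M {\<omega>. \<not> Q x \<omega>})"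
    by (rule measure_UNION_le[OF T]) simp
  also have "\<dots> \<le> real (card T) * p" using sum_bounded_above[of T _ p] p by simp
  finally have "1 - real (card T) * p \<le> 1 - measure_pmf.prob M (\<Union>x\<in>T. {\<omega>. \<not> Q x \<omega>})" by simp
  also have "\<dots> = measure_pmf.prob M (UNIV - (\<Union>x\<in>T. {\<omega>. \<not> Q x \<omega>}))"
    using measure_pmf.prob_compl[of "\<Union>x\<in>T. {\<omega>. \<not> Q x \<omega>}" M] by simp
  also have "UNIV - (\<Union>x\<in>T. {\<omega>. \<not> Q x \<omega>}) = {\<omega>. \<forall>x\<in>T. Q x \<omega>}" by blast
  finally show ?thesis .
qed

theorem lemmaB3:
  fixes init :: "'s::finite pmf"
    and mu :: "nat \<Rightarrow> 's \<Rightarrow> 'a::finite pmf"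
    and P :: "nat \<Rightarrow> 's \<Rightarrow> 'a \<Rightarrow> 's pmf"
    and H m :: nat
    and Vin :: "nat \<Rightarrow> 's \<Rightarrow> real"
    and \<delta> :: real
  assumes "0 < \<delta>" and "\<delta> < 1"
    and "\<forall>t\<in>{1..H}. \<forall>s. 0 \<le> Vin (t + 1) s \<and> Vin (t + 1) s \<le> real H"
  shows "measure_pmf.prob (dataset_pmf init mu P H m)
           {D. \<forall>t\<in>{1..H}. \<forall>s a. occ init mu P H t s a > 0 \<longrightarrow>
              \<bar>sigma_tilde init mu P H D m t (Vin (t + 1)) s a - sigmaV P t (Vin (t + 1)) s a\<bar>
                \<le> 6 * (real H)\<^sup>2 * sqrt (ln (4 * real H * real CARD('s) * real CARD('a) / \<delta>)
                                        / (real m * occ init mu P H t s a))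
                  + 4 * (real H)\<^sup>2 * ln (4 * real H * real CARD('s) * real CARD('a) / \<delta>)
                                        / (real m * occ init mu P H t s a)}
         \<ge> 1 - \<delta>"
proof (cases "H = 0")
  case True
  then show ?thesis using assms by simp
next
  case False
  define K where "K = 4 * real H * real CARD('s) * real CARD('a)"
  define L where "L = ln (K / \<delta>)"
  define T where "T = {1..H} \<times> (UNIV :: 's set) \<times> (UNIV :: 'a set)"
  have "1 \<le> H * (CARD('s) * CARD('a))" using False by (simp add: Suc_le_eq)
  then have K: "4 \<le> K" unfolding K_def by (simp add: mult.assoc flip: of_nat_mult)
  then have L: "0 < L" and eL: "exp (- L) = \<delta> / K"
    using assms(1,2) by (simp_all add: L_def exp_minus field_simps)
  have "real (card T) * (4 * exp (- L)) = K * exp (- L)"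
    by (simp add: T_def K_def card_cartesian_product)
  also have "\<dots> = \<delta>" using K by (simp add: eL)
  finally have "1 - \<delta> = 1 - real (card T) * (4 * exp (- L))" by simp
  also have "\<dots> \<le> measure_pmf.prob (dataset_pmf init mu P H m)
      {D. \<forall>(t, s, a)\<in>T. 0 < occ init mu P H t s a \<longrightarrow>
            \<bar>sigma_tilde init mu P H D m t (Vin (t + 1)) s a - sigmaV P t (Vin (t + 1)) s a\<bar>
              \<le> 6 * (real H)\<^sup>2 * sqrt (L / (real m * occ init mu P H t s a))
                + 4 * (real H)\<^sup>2 * L / (real m * occ init mu P H t s a)}"
    using assms(3) False L
    by (intro prob_all_ge_union_bound) (auto simp: T_def intro!: prob_sigma_tilde_bound_fails_le)
  finally show ?thesis by (simp add: T_def L_def K_def)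
qed

end
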